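(* Let $\mathcal{G}$ be a tomographically local GPT and let $\hat{\xi}:\mathcal{G}\to\mathbf{QuasiSubStoch}$ be a quasiprobabilistic model of $\mathcal{G}$. Then for each system $A$ of $\mathcal{G}$ there is an invertible linear map $\chi_A:A\to\mathbb{R}^{\Lambda_A}$ (where $\hat\xi(A)=\mathbb{R}^{\Lambda_A}$) such that for every process $T:A\to B$ of $\mathcal{G}$, $$\hat{\xi}(T)=\chi_B\circ T\circ\chi_A^{-1},$$ and moreover $\mathbf{1}_{\Lambda_A}\circ\chi_A=u_A$, where $\mathbf{1}_{\Lambda_A}$ is the all-ones covector on $\mathbb{R}^{\Lambda_A}$ and $u_A$ is the deterministic effect of $A$.
   Context: A process theory consists of systems (closed under a composition $A\otimes B$, with a trivial system $I$) and processes $T:A\to B$, closed under sequential composition $\circ$ and parallel composition $\otimes$ and containing identities; processes $I\to A$ are states, $A\to I$ effects, $I\to I$ scalars. $\mathbf{RLinear}$ is the process theory of finite-dimensional real vector spaces (composite $=$ tensor product, trivial system $\mathbb{R}$) and linear maps. $\mathbf{QuasiSubStoch}$ is the sub-process theory of $\mathbf{RLinear}$ whose systems are the spaces $\mathbb{R}^\Lambda$ of real functions on finite sets $\Lambda$ (with $\mathbb{R}^{\Lambda}\otimes\mathbb{R}^{\Lambda'}=\mathbb{R}^{\Lambda\times\Lambda'}$ and trivial system $\mathbb{R}^{\{*\}}=\mathbb{R}$), and whose processes $\mathbb{R}^\Lambda\to\mathbb{R}^{\Lambda'}$ are linear maps given by real matrices $f(\lambda'|\lambda)$ (quasi-substochastic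 maps; no positivity is required). The all-ones covector $\mathbf{1}_\Lambda:\mathbb{R}^\Lambda\to\mathbb{R}$ is $v\mapsto\sum_{\lambda}v(\lambda)$. A tomographically local GPT is here a sub-process theory $\mathcal{G}$ of $\mathbf{RLinear}$ (closed under $\circ$, $\otimes$, containing identities) such that: each system $A$ is a finite-dimensional real vector space and composites are tensor products; the states of $A$ span $A$ and the effects on $A$ span $A^*$; every scalar lies in $[0,1]$; for each type the set of processes is closed under convex combinations; each system $A$ has a distinguished deterministic effect $u_A$ with $u_{A\otimes B}=u_A\otimes u_B$. A quasiprobabilistic model of $\mathcal{G}$ is a map $\hat\xi:\mathcal{G}\to\mathbf{QuasiSubStoch}$ that is diagram-preserving (it assigns to each system $A$ a space $\mathbb{R}^{\Lambda_A}$, with $\hat\xi(A\otimes B)=\mathbb{R}^{\Lambda_A}\otimes\mathbb{R}^{\Lambda_B}$ and $\hat\xi(I)=\mathbb{R}$, and to each process $T:A\to B$ a quasi-substochastic map $\hat\xi(T):\mathbb{R}^{\Lambda_A}\to\mathbb{R}^{\Lambda_B}$, preserving $\circ$, $\otimes$ and identities) and satisfies: (1) $\hat\xi(u_A)=\mathbf{1}_{\Lambda_A}$ for each system $A$; (2) $\hat\xi(s)=s$ for every scalar $s$ (empirical adequacy); (3) whenever a process $T$ is a convex combination $\sum_i\omega_iT_i$ of processes of the same type, $\hat\xi(T)=\sum_i\omega_i\hat\xi(T_i)$, and whenever an effect is a coarse-graining (sum) of effects, its image is the sum of their images. *)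

theory Defs
  imports Complex_Main
begin

text \<open>A linear map R^n -> R^m is represented (w.r.t. the
standard bases) by a real matrix, encoded as a function  nat => nat => real  (row, column)
that vanishes outside the index range  {0..<m} x {0..<n}.  A system of dimension d
is thus realised as R^d, and R^{Lambda} for a finite set Lambda of size k as R^k
(Lambda enumerated as 0..<k).\<close>

type_synonym rmat = "nat \<Rightarrow> nat \<Rightarrow> real"

definition wf_mat :: "nat \<Rightarrow> nat \<Rightarrow> rmat \<Rightarrow> bool" where
  "wf_mat m n M \<longleftrightarrow> (\<forall>i j. (m \<le> i \<or> n \<le> j) \<longrightarrow> M i j = 0)"

definition mmul :: "nat \<Rightarrow> rmat \<Rightarrow> rmat \<Rightarrow> rmat" where
  "mmul k M N = (\<lambda>i j. \<Sum>l<k. M i l * N l j)"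

definition idm :: "nat \<Rightarrow> rmat" where
  "idm n = (\<lambda>i j. if i = j \<and> i < n then 1 else 0)"

text \<open>The basis vector e_a \<otimes> e_b corresponds to index a * (dimension of second factor) + b; for
R^Lambda \<otimes> R^Lambda' = R^(Lambda x Lambda') this is the enumeration of pairs.\<close>
definition kron :: "nat \<Rightarrow> nat \<Rightarrow> rmat \<Rightarrow> rmat \<Rightarrow> rmat" where
  "kron r c M N = (\<lambda>i j. M (i div r) (j div c) * N (i mod r) (j mod c))"

definition ones :: "nat \<Rightarrow> rmat" where
  "ones n = (\<lambda>i j. if i = 0 \<and> j < n then 1 else 0)"

definition lincomb :: "nat \<Rightarrow> (nat \<Rightarrow> real) \<Rightarrow> (nat \<Rightarrow> rmat) \<Rightarrow> rmat" where
  "lincomb k c Ms = (\<lambda>i j. \<Sum>l<k. c l * Ms l i j)"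

definition invertible_m :: "nat \<Rightarrow> nat \<Rightarrow> rmat \<Rightarrow> bool" where
  "invertible_m m n M \<longleftrightarrow> m = n \<and> wf_mat n n M \<and>
     (\<exists>N. wf_mat n n N \<and> mmul n M N = idm n \<and> mmul n N M = idm n)"

definition inv_m :: "nat \<Rightarrow> rmat \<Rightarrow> rmat" where
  "inv_m n M = (SOME N. wf_mat n n N \<and> mmul n M N = idm n \<and> mmul n N M = idm n)"

text \<open>Systems are the elements of type 's; tens is the composition of systems, I the trivial system,
dm A the dimension of the vector space A (realised as R^(dm A)), Proc A B the set of
processes A -> B (as matrices of size dm B x dm A), u A the deterministic effect.\<close>
definition tl_gpt ::
  "('s \<Rightarrow> 's \<Rightarrow> 's) \<Rightarrow> 's \<Rightarrow> ('s \<Rightarrow> nat) \<Rightarrow> ('s \<Rightarrow> 's \<Rightarrow> rmat set) \<Rightarrow> ('s \<Rightarrow> rmat) \<Rightarrow> bool" where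
  "tl_gpt tens I dm Proc u \<longleftrightarrow>
     dm I = 1 \<and>
     (\<forall>A B. dm (tens A B) = dm A * dm B) \<and>
     (\<forall>A B T. T \<in> Proc A B \<longrightarrow> wf_mat (dm B) (dm A) T) \<and>
     (\<forall>A B C T S. T \<in> Proc A B \<longrightarrow> S \<in> Proc B C \<longrightarrow> mmul (dm B) S T \<in> Proc A C) \<and>
     (\<forall>A B C D T S. T \<in> Proc A B \<longrightarrow> S \<in> Proc C D \<longrightarrow>
        kron (dm D) (dm C) T S \<in> Proc (tens A C) (tens B D)) \<and>
     (\<forall>A. idm (dm A) \<in> Proc A A) \<and>
     \<comment> \<open>states span A\<close>
     (\<forall>A v. wf_mat (dm A) 1 v \<longrightarrow>
        (\<exists>k c S. (\<forall>l<k. S l \<in> Proc I A) \<and> v = lincomb k c S)) \<and>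
     \<comment> \<open>effects span the dual of A\<close>
     (\<forall>A w. wf_mat 1 (dm A) w \<longrightarrow>
        (\<exists>k c E. (\<forall>l<k. E l \<in> Proc A I) \<and> w = lincomb k c E)) \<and>
     \<comment> \<open>scalars lie in [0,1]\<close>
     (\<forall>s \<in> Proc I I. 0 \<le> s 0 0 \<and> s 0 0 \<le> 1) \<and>
     \<comment> \<open>convexity\<close>
     (\<forall>A B k \<omega> Ts. (\<forall>l<k. 0 \<le> \<omega> l \<and> Ts l \<in> Proc A B) \<and> (\<Sum>l<k. \<omega> l) = 1 \<longrightarrow>
        lincomb k \<omega> Ts \<in> Proc A B) \<and>
     \<comment> \<open>deterministic effects\<close>
     (\<forall>A. u A \<in> Proc A I) \<and>
     (\<forall>A B. u (tens A B) = kron 1 (dm B) (u A) (u B))"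

text \<open>A quasiprobabilistic model: Lam A = |Lambda_A|, so xi(A) = R^(Lambda_A);
xi A B T is the quasi-substochastic matrix assigned to the process T : A -> B.\<close>
definition quasi_model ::
  "('s \<Rightarrow> 's \<Rightarrow> 's) \<Rightarrow> 's \<Rightarrow> ('s \<Rightarrow> nat) \<Rightarrow> ('s \<Rightarrow> 's \<Rightarrow> rmat set) \<Rightarrow> ('s \<Rightarrow> rmat)
    \<Rightarrow> ('s \<Rightarrow> nat) \<Rightarrow> ('s \<Rightarrow> 's \<Rightarrow> rmat \<Rightarrow> rmat) \<Rightarrow> bool" where
  "quasi_model tens I dm Proc u Lam xi \<longleftrightarrow>
     Lam I = 1 \<and>
     (\<forall>A B. Lam (tens A B) = Lam A * Lam B) \<and>
     (\<forall>A B T. T \<in> Proc A B \<longrightarrow> wf_mat (Lam B) (Lam A) (xi A B T)) \<and>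
     (\<forall>A B C T S. T \<in> Proc A B \<longrightarrow> S \<in> Proc B C \<longrightarrow>
        xi A C (mmul (dm B) S T) = mmul (Lam B) (xi B C S) (xi A B T)) \<and>
     (\<forall>A B C D T S. T \<in> Proc A B \<longrightarrow> S \<in> Proc C D \<longrightarrow>
        xi (tens A C) (tens B D) (kron (dm D) (dm C) T S) =
          kron (Lam D) (Lam C) (xi A B T) (xi C D S)) \<and>
     (\<forall>A. xi A A (idm (dm A)) = idm (Lam A)) \<and>
     \<comment> \<open>(1) deterministic effects go to the all-ones covector\<close>
     (\<forall>A. xi A I (u A) = ones (Lam A)) \<and>
     \<comment> \<open>(2) empirical adequacy\<close>
     (\<forall>s \<in> Proc I I. xi I I s = s) \<and>
     \<comment> \<open>(3) convex-linearity\<close>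
     (\<forall>A B k \<omega> Ts. (\<forall>l<k. 0 \<le> \<omega> l \<and> Ts l \<in> Proc A B) \<and> (\<Sum>l<k. \<omega> l) = 1 \<longrightarrow>
        xi A B (lincomb k \<omega> Ts) = lincomb k \<omega> (\<lambda>l. xi A B (Ts l))) \<and>
     \<comment> \<open>(3) coarse-graining of effects\<close>
     (\<forall>A k Es. 0 < k \<and> (\<forall>l<k. Es l \<in> Proc A I) \<and> lincomb k (\<lambda>_. 1) Es \<in> Proc A I \<longrightarrow>
        xi A I (lincomb k (\<lambda>_. 1) Es) = lincomb k (\<lambda>_. 1) (\<lambda>l. xi A I (Es l)))"

end

theory Submission
  imports Defs
begin

(* Since the states of A span A and its effects span the dual, the identity of A resolves as
   id = sum_x c_x s_x e_x with states s_x and effects e_x.  The model xi is only convex-linear, but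
   it respects composition and scalars, hence the pairings e s and the relation P P = (e s) P for the
   rank-one process P = s e.  If some e s differs from 1, this scaling relation upgrades
   convex-linearity to linearity on the processes A -> A; if all e s equal 1, the coefficients c_x
   sum to 1 and the resolution is already an affine relation.  Either way
   id = sum_x c_x xi(s_x) xi(e_x) on R^Lambda_A.  Then chi = sum_x c_x xi(s_x) e_x and
   sum_x c_x s_x xi(e_x) are mutually inverse, chi s = xi(s) for every state s, and
   xi(T) = chi T chi^-1 follows because the states span A; finally ones chi = xi(u) chi = u. *)

definition lincomb_on :: "'k set \<Rightarrow> ('k \<Rightarrow> real) \<Rightarrow> ('k \<Rightarrow> rmat) \<Rightarrow> rmat" where
  "lincomb_on K c T = (\<lambda>i j. \<Sum>x\<in>K. c x * T x i j)"

lemma lincomb_eq_lincomb_on: "lincomb k c T = lincomb_on {..<k} c T"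
  by (simp add: lincomb_def lincomb_on_def)

lemma lincomb_on_cong:
  "(\<And>x. x \<in> K \<Longrightarrow> T x = T' x) \<Longrightarrow> lincomb_on K c T = lincomb_on K c T'"
  unfolding lincomb_on_def by (intro ext sum.cong) auto

lemma mmul_assoc: "mmul n (mmul m M N) P = mmul m M (mmul n N P)"
  unfolding mmul_def
  by (intro ext) (simp add: sum_distrib_left sum_distrib_right mult.assoc sum.swap[of _ "{..<n}"])

lemma mmul_lincomb_on_right:
  "mmul n M (lincomb_on K c T) = lincomb_on K c (\<lambda>x. mmul n M (T x))"
  unfolding mmul_def lincomb_on_def
  by (intro ext) (simp add: sum_distrib_left sum.swap[of _ K] mult.left_commute)

lemma mmul_lincomb_on_left:
  "mmul n (lincomb_on K c T) M = lincomb_on K c (\<lambda>x. mmul n (T x) M)"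
  unfolding mmul_def lincomb_on_def
  by (intro ext) (simp add: sum_distrib_left sum_distrib_right sum.swap[of _ K] mult.assoc)

lemma mmul_idm_left:
  assumes "wf_mat m n M"
  shows "mmul m (idm m) M = M"
proof (intro ext)
  fix i j
  show "mmul m (idm m) M i j = M i j"
    using assms by (cases "i < m")
      (auto simp: mmul_def idm_def wf_mat_def if_distrib[of "\<lambda>x. x * _"] cong: if_cong)
qed

lemma mmul_idm_right: "wf_mat m n M \<Longrightarrow> mmul n M (idm n) = M"
  unfolding mmul_def idm_def wf_mat_def
  by (intro ext) (auto simp: if_distrib[of "\<lambda>x. _ * x"] cong: if_cong)

lemma two_sided_inverse_dims_eq:
  assumes "mmul n M N = idm m" and "mmul m N M = idm n"
  shows "m = n"
proof -
  have "real m = (\<Sum>i<m. idm m i i)" by (simp add: idm_def)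
  also have "\<dots> = (\<Sum>i<m. \<Sum>p<n. M i p * N p i)" using assms(1) by (simp add: mmul_def fun_eq_iff)
  also have "\<dots> = (\<Sum>p<n. \<Sum>i<m. N p i * M i p)" by (subst sum.swap) (simp add: mult.commute)
  also have "\<dots> = (\<Sum>p<n. idm n p p)" using assms(2) by (simp add: mmul_def fun_eq_iff)
  also have "\<dots> = real n" by (simp add: idm_def)
  finally show ?thesis by simp
qed

lemma invertible_mI:
  assumes "wf_mat m n M" "wf_mat n m N" "mmul n M N = idm m" "mmul m N M = idm n"
  shows "invertible_m m n M"
  using assms two_sided_inverse_dims_eq[OF assms(3,4)] unfolding invertible_m_def by blast

lemma invertible_m_inv_m:
  assumes "invertible_m m n M"
  shows "m = n" and "mmul n M (inv_m n M) = idm n"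
proof -
  show "m = n" using assms unfolding invertible_m_def by simp
  show "mmul n M (inv_m n M) = idm n"
    using assms someI_ex[of "\<lambda>N. wf_mat n n N \<and> mmul n M N = idm n \<and> mmul n N M = idm n"]
    unfolding invertible_m_def inv_m_def by blast
qed

definition basis_col :: "nat \<Rightarrow> rmat" where
  "basis_col j = (\<lambda>p q. if p = j \<and> q = 0 then 1 else 0)"

definition basis_row :: "nat \<Rightarrow> rmat" where
  "basis_row j = (\<lambda>p q. if p = 0 \<and> q = j then 1 else 0)"

lemma mmul_basis_col: "j < n \<Longrightarrow> mmul n M (basis_col j) i 0 = M i j"
  by (simp add: mmul_def basis_col_def if_distrib[of "\<lambda>x. _ * x"] cong: if_cong)

lemma idm_eq_sum_basis_outer:
  "idm n = lincomb_on {..<n} (\<lambda>_. 1) (\<lambda>j. mmul 1 (basis_col j) (basis_row j))"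
  by (intro ext) (auto simp: idm_def lincomb_on_def mmul_def basis_col_def basis_row_def
      if_distrib[of "\<lambda>x. x * _"] cong: if_cong)

definition spans :: "nat \<Rightarrow> nat \<Rightarrow> rmat set \<Rightarrow> bool" where
  "spans m n V \<longleftrightarrow> (\<forall>v. wf_mat m n v \<longrightarrow> (\<exists>k c T. (\<forall>l<k. T l \<in> V) \<and> v = lincomb k c T))"

lemma mat_eq_if_eq_on_spanning:
  assumes span: "spans n 1 V"
    and M: "wf_mat m n M" and N: "wf_mat m n N"
    and eq: "\<And>v. v \<in> V \<Longrightarrow> mmul n M v = mmul n N v"
  shows "M = N"
proof (intro ext)
  fix i j
  show "M i j = N i j"
  proof (cases "j < n")
    case True
    have "wf_mat n 1 (basis_col j)" using True by (simp add: wf_mat_def basis_col_def)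
    then obtain k :: nat and c T where T: "\<forall>l<k. T l \<in> V" and bj: "basis_col j = lincomb_on {..<k} c T"
      using span unfolding spans_def lincomb_eq_lincomb_on by blast
    have "mmul n M (basis_col j) = mmul n N (basis_col j)"
      unfolding bj mmul_lincomb_on_right using T eq by (simp add: lincomb_on_def)
    then show ?thesis using mmul_basis_col[OF True] by metis
  next
    case False
    then show ?thesis using M N by (simp add: wf_mat_def)
  qed
qed

lemma lincomb_on_lincomb_on:
  assumes "finite K" "\<And>x. x \<in> K \<Longrightarrow> finite (J x)"
  shows "lincomb_on K a (\<lambda>x. lincomb_on (J x) (b x) (T x))
       = lincomb_on (SIGMA x:K. J x) (\<lambda>(x, y). a x * b x y) (\<lambda>(x, y). T x y)"
  using assms by (intro ext) (simp add: lincomb_on_def sum_distrib_left mult.assoc sum.Sigma split_def)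

lemma mmul_lincomb_on_lincomb_on:
  "mmul n (lincomb_on K a S) (lincomb_on J b E)
     = lincomb_on K a (\<lambda>x. lincomb_on J b (\<lambda>y. mmul n (S x) (E y)))"
  by (simp only: mmul_lincomb_on_left) (simp only: mmul_lincomb_on_right)

lemma idm_outer_resolution:
  assumes spanV: "spans n 1 V" and spanW: "spans 1 n W"
  obtains K :: "(nat \<times> nat \<times> nat) set" and c S E
  where "finite K" "\<forall>x\<in>K. S x \<in> V \<and> E x \<in> W"
    and "idm n = lincomb_on K c (\<lambda>x. mmul 1 (S x) (E x))"
proof -
  have "\<forall>j. \<exists>k c T. j < n \<longrightarrow> (\<forall>l<k. T l \<in> V) \<and> basis_col j = lincomb k c T"
    using spanV by (auto simp: spans_def wf_mat_def basis_col_def)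
  then obtain kS \<alpha> SS
    where SS: "\<And>j. j < n \<Longrightarrow> (\<forall>l<kS j. SS j l \<in> V) \<and> basis_col j = lincomb (kS j) (\<alpha> j) (SS j)"
    by metis
  have "\<forall>j. \<exists>k c T. j < n \<longrightarrow> (\<forall>l<k. T l \<in> W) \<and> basis_row j = lincomb k c T"
    using spanW by (auto simp: spans_def wf_mat_def basis_row_def)
  then obtain kE \<beta> EE
    where EE: "\<And>j. j < n \<Longrightarrow> (\<forall>m<kE j. EE j m \<in> W) \<and> basis_row j = lincomb (kE j) (\<beta> j) (EE j)"
    by metis
  define K where "K = (SIGMA j:{..<n}. SIGMA l:{..<kS j}. {..<kE j})"
  have "idm n = lincomb_on {..<n} (\<lambda>_. 1) (\<lambda>j. lincomb_on {..<kS j} (\<alpha> j)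
                  (\<lambda>l. lincomb_on {..<kE j} (\<beta> j) (\<lambda>m. mmul 1 (SS j l) (EE j m))))"
    unfolding idm_eq_sum_basis_outer lincomb_on_def[of "{..<n}"]
    using SS EE by (intro ext sum.cong) (simp_all add: lincomb_eq_lincomb_on mmul_lincomb_on_lincomb_on)
  also have "\<dots> = lincomb_on K (\<lambda>(j, l, m). \<alpha> j l * \<beta> j m)
                    (\<lambda>x. mmul 1 ((\<lambda>(j, l, m). SS j l) x) ((\<lambda>(j, l, m). EE j m) x))"
    unfolding K_def by (simp add: lincomb_on_lincomb_on split_def)
  finally show ?thesis
    using SS EE by (intro that[of K]) (auto simp: K_def)
qed

lemma wf_mat_idm: "wf_mat n n (idm n)"
  by (simp add: wf_mat_def idm_def)

lemma wf_mat_mmul: "wf_mat m k M \<Longrightarrow> wf_mat k' n N \<Longrightarrow> wf_mat m n (mmul k M N)"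
  unfolding wf_mat_def mmul_def by auto

lemma wf_mat_lincomb_on: "(\<And>x. x \<in> K \<Longrightarrow> wf_mat m n (T x)) \<Longrightarrow> wf_mat m n (lincomb_on K c T)"
  unfolding wf_mat_def lincomb_on_def by auto

lemma mmul_outer_outer:
  "mmul n (mmul 1 v w) (mmul 1 v' w') = (\<lambda>i j. mmul n w v' 0 0 * mmul 1 v w' i j)"
  unfolding mmul_def by (intro ext) (simp add: sum_distrib_left sum_distrib_right mult_ac)

lemma mmul_outer_sandwich:
  "mmul n M (mmul n (mmul 1 v w) N) = mmul 1 (mmul n M v) (mmul n w N)"
  by (metis mmul_assoc)

lemma lincomb_outer_mmul_eq:
  assumes idm: "idm L = lincomb_on K c (\<lambda>x. mmul 1 (\<sigma> x) (\<epsilon> x))" and w: "wf_mat L k w"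
    and pair: "\<And>x. x \<in> K \<Longrightarrow> mmul d (E x) v = mmul L (\<epsilon> x) w"
  shows "mmul d (lincomb_on K c (\<lambda>x. mmul 1 (\<sigma> x) (E x))) v = w"
proof -
  have "mmul d (lincomb_on K c (\<lambda>x. mmul 1 (\<sigma> x) (E x))) v
      = lincomb_on K c (\<lambda>x. mmul 1 (\<sigma> x) (mmul L (\<epsilon> x) w))"
    by (simp add: mmul_lincomb_on_left mmul_assoc pair cong: lincomb_on_cong)
  also have "\<dots> = mmul L (idm L) w"
    by (simp add: idm mmul_lincomb_on_left mmul_assoc)
  finally show ?thesis using mmul_idm_left[OF w] by simp
qed

lemma mmul_lincomb_outer_eq:
  assumes idm: "idm L = lincomb_on K c (\<lambda>x. mmul 1 (\<sigma> x) (\<epsilon> x))" and w: "wf_mat k L w"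
    and pair: "\<And>x. x \<in> K \<Longrightarrow> mmul d v (S x) = mmul L w (\<sigma> x)"
  shows "mmul d v (lincomb_on K c (\<lambda>x. mmul 1 (S x) (\<epsilon> x))) = w"
proof -
  have "mmul d v (lincomb_on K c (\<lambda>x. mmul 1 (S x) (\<epsilon> x)))
      = lincomb_on K c (\<lambda>x. mmul 1 (mmul L w (\<sigma> x)) (\<epsilon> x))"
    by (simp add: mmul_lincomb_on_right mmul_assoc[symmetric] pair cong: lincomb_on_cong)
  also have "\<dots> = mmul L w (idm L)"
    by (simp add: idm mmul_lincomb_on_right mmul_assoc)
  finally show ?thesis using mmul_idm_right[OF w] by simp
qed

definition convex_linear_on :: "rmat set \<Rightarrow> (rmat \<Rightarrow> rmat) \<Rightarrow> bool" where
  "convex_linear_on C f \<longleftrightarrow>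
     (\<forall>k \<omega> T. (\<forall>l<k. 0 \<le> \<omega> l \<and> T l \<in> C) \<and> (\<Sum>l<k. \<omega> l) = 1 \<longrightarrow>
        lincomb k \<omega> T \<in> C \<and> f (lincomb k \<omega> T) = lincomb k \<omega> (\<lambda>l. f (T l)))"

lemma lincomb_on_reindex:
  assumes "bij_betw h J K"
  shows "lincomb_on K c T = lincomb_on J (\<lambda>y. c (h y)) (\<lambda>y. T (h y))"
  unfolding lincomb_on_def by (intro ext) (rule sum.reindex_bij_betw[OF assms, symmetric])

lemma lincomb_on_divide:
  "lincomb_on K (\<lambda>x. a x / r) T = (\<lambda>i j. lincomb_on K a T i j / r)"
  unfolding lincomb_on_def by (intro ext) (simp add: sum_divide_distrib)

lemma convex_linear_on_convex_combination:
  assumes f: "convex_linear_on C f" and K: "finite K"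
    and \<omega>: "\<forall>x\<in>K. 0 \<le> \<omega> x \<and> T x \<in> C" "sum \<omega> K = 1"
  shows "f (lincomb_on K \<omega> T) = lincomb_on K \<omega> (\<lambda>x. f (T x))"
proof -
  obtain h where h: "bij_betw h {..<card K} K"
    using ex_bij_betw_nat_finite[OF K] by (auto simp: atLeast0LessThan)
  have "\<forall>l<card K. 0 \<le> \<omega> (h l) \<and> T (h l) \<in> C" and "(\<Sum>l<card K. \<omega> (h l)) = 1"
    using \<omega> bij_betwE[OF h] sum.reindex_bij_betw[OF h, of \<omega>] by auto
  then show ?thesis
    using f[unfolded convex_linear_on_def, rule_format, of "card K" "\<lambda>l. \<omega> (h l)" "\<lambda>l. T (h l)"]
    unfolding lincomb_on_reindex[OF h] lincomb_eq_lincomb_on by blast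
qed

lemma convex_linear_on_affine_relation:
  assumes f: "convex_linear_on C f" and fin: "finite K" "finite J"
    and a: "\<forall>x\<in>K. 0 \<le> a x \<and> T x \<in> C" and b: "\<forall>y\<in>J. 0 \<le> b y \<and> U y \<in> C"
    and mass: "sum a K = sum b J" "0 < sum a K"
    and rel: "lincomb_on K a T = lincomb_on J b U"
  shows "lincomb_on K a (\<lambda>x. f (T x)) = lincomb_on J b (\<lambda>y. f (U y))"
proof -
  define W where "W = sum a K"
  have "f (lincomb_on K (\<lambda>x. a x / W) T) = lincomb_on K (\<lambda>x. a x / W) (\<lambda>x. f (T x))"
    using mass a by (intro convex_linear_on_convex_combination[OF f fin(1)])
      (auto simp: W_def sum_divide_distrib[symmetric])
  moreover have "f (lincomb_on J (\<lambda>y. b y / W) U) = lincomb_on J (\<lambda>y. b y / W) (\<lambda>y. f (U y))"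
    using mass b by (intro convex_linear_on_convex_combination[OF f fin(2)])
      (auto simp: W_def sum_divide_distrib[symmetric])
  ultimately have "lincomb_on K (\<lambda>x. a x / W) (\<lambda>x. f (T x)) = lincomb_on J (\<lambda>y. b y / W) (\<lambda>y. f (U y))"
    using rel by (simp add: lincomb_on_divide)
  then show ?thesis
    using mass by (simp add: lincomb_on_divide W_def fun_eq_iff)
qed

lemma lincomb_on_Plus:
  "finite K \<Longrightarrow> finite J \<Longrightarrow>
   lincomb_on (K <+> J) c T = (\<lambda>i j. lincomb_on K (\<lambda>x. c (Inl x)) (\<lambda>x. T (Inl x)) i j
                                    + lincomb_on J (\<lambda>y. c (Inr y)) (\<lambda>y. T (Inr y)) i j)"
  unfolding lincomb_on_def by (intro ext) (simp add: sum.Plus comp_def)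

lemma convex_linear_on_affine_combination:
  assumes f: "convex_linear_on C f" and K: "finite K" and T: "\<forall>x\<in>K. T x \<in> C"
    and M: "M \<in> C" and mass: "sum c K = 1" and comb: "M = lincomb_on K c T"
  shows "f M = lincomb_on K c (\<lambda>x. f (T x))"
proof -
  define cp where "cp x = max (c x) 0" for x
  define cn where "cn x = max (- c x) 0" for x
  have c: "c x = cp x - cn x" for x by (simp add: cp_def cn_def)
  \<comment> \<open>Move the negative coefficients to the side of M: sum cp T = M + sum cn T.\<close>
  define b where "b = case_sum cn (\<lambda>_ :: unit. 1)"
  define U where "U = case_sum T (\<lambda>_ :: unit. M)"
  have "lincomb_on K cp (\<lambda>x. f (T x)) = lincomb_on (K <+> UNIV) b (\<lambda>y. f (U y))"
  proof (rule convex_linear_on_affine_relation[OF f K])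
    have "sum cp K = sum c K + sum cn K" by (simp add: c sum_subtractf)
    then show "sum cp K = sum b (K <+> UNIV)" and "0 < sum cp K"
      using mass K by (simp_all add: b_def sum.Plus comp_def cn_def sum_nonneg add_pos_nonneg)
    show "lincomb_on K cp T = lincomb_on (K <+> UNIV) b U"
      using K unfolding lincomb_on_Plus[OF K finite]
      by (simp add: comb b_def U_def lincomb_on_def c fun_eq_iff left_diff_distrib sum_subtractf)
  qed (use K T M in \<open>auto simp: cp_def cn_def b_def U_def split: sum.split\<close>)
  then show ?thesis
    using K unfolding lincomb_on_Plus[OF K finite]
    by (simp add: b_def U_def lincomb_on_def c fun_eq_iff left_diff_distrib sum_subtractf)
qed

lemma convex_linear_on_linear_combination:
  assumes f: "convex_linear_on C f"
    and P: "P \<in> C" and Q: "Q \<in> C" and "Q = (\<lambda>i j. r * P i j)" and "f Q = (\<lambda>i j. r * f P i j)"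
    and r: "r \<noteq> 1"
    and K: "finite K" and T: "\<forall>x\<in>K. T x \<in> C" and M: "M \<in> C" and comb: "M = lincomb_on K c T"
  shows "f M = lincomb_on K c (\<lambda>x. f (T x))"
proof -
  \<comment> \<open>Adding the multiple \<nu> (Q - r P) of the null combination Q - r P makes the coefficients sum to 1.\<close>
  define \<nu> where "\<nu> = (1 - sum c K) / (1 - r)"
  define c' where "c' = case_sum c (\<lambda>b. if b then \<nu> else - \<nu> * r)"
  define T' where "T' = case_sum T (\<lambda>b. if b then Q else P)"
  have "f M = lincomb_on (K <+> UNIV) c' (\<lambda>y. f (T' y))"
  proof (rule convex_linear_on_affine_combination[OF f _ _ M])
    have "\<nu> * (1 - r) = 1 - sum c K" using r by (simp add: \<nu>_def)
    then show "sum c' (K <+> UNIV) = 1"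
      using K by (simp add: c'_def sum.Plus comp_def UNIV_bool algebra_simps)
    show "M = lincomb_on (K <+> UNIV) c' T'"
      using K assms(4) unfolding lincomb_on_Plus[OF K finite]
      by (simp add: comb c'_def T'_def lincomb_on_def UNIV_bool fun_eq_iff algebra_simps)
  qed (use K T P Q in \<open>auto simp: T'_def split: sum.split\<close>)
  then show ?thesis
    using K assms(5) unfolding lincomb_on_Plus[OF K finite]
    by (simp add: c'_def T'_def lincomb_on_def UNIV_bool fun_eq_iff algebra_simps)
qed

locale gpt_quasi_model =
  fixes tens :: "'s \<Rightarrow> 's \<Rightarrow> 's" and I :: 's and dm :: "'s \<Rightarrow> nat"
    and Proc :: "'s \<Rightarrow> 's \<Rightarrow> rmat set" and u :: "'s \<Rightarrow> rmat"
    and Lam :: "'s \<Rightarrow> nat" and xi :: "'s \<Rightarrow> 's \<Rightarrow> rmat \<Rightarrow> rmat"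
  assumes gpt: "tl_gpt tens I dm Proc u"
    and model: "quasi_model tens I dm Proc u Lam xi"
begin

lemma
  dm_I: "dm I = 1" and
  Proc_wf: "T \<in> Proc A B \<Longrightarrow> wf_mat (dm B) (dm A) T" and
  Proc_comp: "T \<in> Proc A B \<Longrightarrow> S \<in> Proc B C \<Longrightarrow> mmul (dm B) S T \<in> Proc A C" and
  idm_Proc: "idm (dm A) \<in> Proc A A" and
  states_span: "spans (dm A) 1 (Proc I A)" and
  effects_span: "spans 1 (dm A) (Proc A I)" and
  Proc_convex: "\<forall>l<k. 0 \<le> \<omega> l \<and> Ts l \<in> Proc A B \<Longrightarrow> (\<Sum>l<k. \<omega> l) = 1 \<Longrightarrow>
    lincomb k \<omega> Ts \<in> Proc A B" and
  u_Proc: "u A \<in> Proc A I"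
  by (simp_all add: spans_def gpt[unfolded tl_gpt_def])

lemma
  Lam_I: "Lam I = 1" and
  xi_wf: "T \<in> Proc A B \<Longrightarrow> wf_mat (Lam B) (Lam A) (xi A B T)" and
  xi_comp: "T \<in> Proc A B \<Longrightarrow> S \<in> Proc B C \<Longrightarrow>
    xi A C (mmul (dm B) S T) = mmul (Lam B) (xi B C S) (xi A B T)" and
  xi_idm: "xi A A (idm (dm A)) = idm (Lam A)" and
  xi_u: "xi A I (u A) = ones (Lam A)" and
  xi_scalar: "s \<in> Proc I I \<Longrightarrow> xi I I s = s" and
  xi_convex: "\<forall>l<k. 0 \<le> \<omega> l \<and> Ts l \<in> Proc A B \<Longrightarrow> (\<Sum>l<k. \<omega> l) = 1 \<Longrightarrow>
    xi A B (lincomb k \<omega> Ts) = lincomb k \<omega> (\<lambda>l. xi A B (Ts l))" and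
  xi_coarse_graining: "0 < k \<Longrightarrow> \<forall>l<k. Es l \<in> Proc A I \<Longrightarrow> lincomb k (\<lambda>_. 1) Es \<in> Proc A I \<Longrightarrow>
    xi A I (lincomb k (\<lambda>_. 1) Es) = lincomb k (\<lambda>_. 1) (\<lambda>l. xi A I (Es l))"
  by (simp_all add: model[unfolded quasi_model_def])

lemma convex_linear_on_xi: "convex_linear_on (Proc A B) (xi A B)"
  by (simp add: convex_linear_on_def Proc_convex xi_convex)

lemma state_wf:
  assumes "s \<in> Proc I A"
  shows "wf_mat (dm A) 1 s" and "wf_mat (Lam A) 1 (xi I A s)"
  using Proc_wf[OF assms] xi_wf[OF assms] by (simp_all add: dm_I Lam_I)

lemma effect_wf:
  assumes "e \<in> Proc A I"
  shows "wf_mat 1 (dm A) e" and "wf_mat 1 (Lam A) (xi A I e)"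
  using Proc_wf[OF assms] xi_wf[OF assms] by (simp_all add: dm_I Lam_I)

lemma xi_pairing:
  assumes "s \<in> Proc I A" and "e \<in> Proc A I"
  shows "mmul (Lam A) (xi A I e) (xi I A s) = mmul (dm A) e s"
  using xi_comp[OF assms] xi_scalar[OF Proc_comp[OF assms]] by simp

lemma outer_in_Proc: "s \<in> Proc I A \<Longrightarrow> e \<in> Proc A I \<Longrightarrow> mmul 1 s e \<in> Proc A A"
  using Proc_comp[of e A I s A] by (simp add: dm_I)

lemma xi_outer:
  "s \<in> Proc I A \<Longrightarrow> e \<in> Proc A I \<Longrightarrow> xi A A (mmul 1 s e) = mmul 1 (xi I A s) (xi A I e)"
  using xi_comp[of e A I s A] by (simp add: dm_I Lam_I)

lemma Lam_eq_0_if_dm_eq_0: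
  assumes "dm A = 0"
  shows "Lam A = 0"
proof -
  \<comment> \<open>The deterministic effect of a zero-dimensional system is the zero functional, so u = u + u;
     coarse-graining then gives ones = 2 ones.\<close>
  have u0: "u A = (\<lambda>_ _. 0)"
    using Proc_wf[OF u_Proc[of A]] assms by (auto simp: wf_mat_def)
  have uu: "lincomb 2 (\<lambda>_. 1) (\<lambda>_. u A) = u A"
    by (simp add: lincomb_def u0)
  have "ones (Lam A) = lincomb 2 (\<lambda>_. 1) (\<lambda>_. ones (Lam A))"
    using xi_coarse_graining[of 2 "\<lambda>_. u A" A] by (simp add: uu u_Proc xi_u)
  then have "ones (Lam A) 0 0 = lincomb 2 (\<lambda>_. 1) (\<lambda>_. ones (Lam A)) 0 0"
    by metis
  then have "ones (Lam A) 0 0 = 2 * ones (Lam A) 0 0"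
    by (simp add: lincomb_def numeral_2_eq_2)
  then show ?thesis by (simp add: ones_def split: if_splits)
qed

lemma xi_linear_on_Proc_if_pairing_ne_1:
  assumes s0: "s0 \<in> Proc I A" and e0: "e0 \<in> Proc A I" and r: "mmul (dm A) e0 s0 0 0 \<noteq> 1"
    and K: "finite K" and T: "\<forall>x\<in>K. T x \<in> Proc A A" and M: "M \<in> Proc A A"
    and comb: "M = lincomb_on K c T"
  shows "xi A A M = lincomb_on K c (\<lambda>x. xi A A (T x))"
proof -
  let ?P0 = "mmul 1 s0 e0" and ?r = "mmul (dm A) e0 s0 0 0"
  \<comment> \<open>The rank-one process P0 satisfies P0 P0 = r P0 with r \<noteq> 1, and so does its image under xi.\<close>
  have P0: "?P0 \<in> Proc A A"
    using outer_in_Proc s0 e0 by blast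
  show ?thesis
  proof (rule convex_linear_on_linear_combination[OF convex_linear_on_xi P0 Proc_comp[OF P0 P0] _ _
        r K T M comb])
    show "mmul (dm A) ?P0 ?P0 = (\<lambda>i j. ?r * ?P0 i j)"
      by (rule mmul_outer_outer)
    have "xi A A (mmul (dm A) ?P0 ?P0) = mmul (Lam A) (xi A A ?P0) (xi A A ?P0)"
      by (rule xi_comp[OF P0 P0])
    also have "\<dots> = (\<lambda>i j. mmul (Lam A) (xi A I e0) (xi I A s0) 0 0 * xi A A ?P0 i j)"
      by (simp only: xi_outer[OF s0 e0] mmul_outer_outer)
    finally show "xi A A (mmul (dm A) ?P0 ?P0) = (\<lambda>i j. ?r * xi A A ?P0 i j)"
      by (simp only: xi_pairing[OF s0 e0])
  qed
qed

lemma sum_eq_1_if_pairings_eq_1: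
  assumes pairing: "\<And>s e. s \<in> Proc I A \<Longrightarrow> e \<in> Proc A I \<Longrightarrow> mmul (dm A) e s 0 0 = 1"
    and SE: "\<forall>x\<in>K. S x \<in> Proc I A \<and> E x \<in> Proc A I" and x0: "x0 \<in> K"
    and res: "idm (dm A) = lincomb_on K c (\<lambda>x. mmul 1 (S x) (E x))"
  shows "sum c K = 1"
proof -
  let ?s = "S x0" and ?e = "E x0"
  have "1 = mmul (dm A) ?e (mmul (dm A) (idm (dm A)) ?s) 0 0"
    using pairing SE x0 mmul_idm_left[OF state_wf(1)] by simp
  also have "\<dots> = lincomb_on K c (\<lambda>x. mmul 1 (mmul (dm A) ?e (S x)) (mmul (dm A) (E x) ?s)) 0 0"
    by (simp only: res mmul_lincomb_on_left mmul_lincomb_on_right mmul_outer_sandwich)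
  also have "\<dots> = sum c K"
    using pairing SE x0 by (simp add: lincomb_on_def mmul_def)
  finally show ?thesis ..
qed

lemma xi_idm_resolution:
  assumes K: "finite K" and SE: "\<forall>x\<in>K. S x \<in> Proc I A \<and> E x \<in> Proc A I"
    and res: "idm (dm A) = lincomb_on K c (\<lambda>x. mmul 1 (S x) (E x))"
  shows "idm (Lam A) = lincomb_on K c (\<lambda>x. mmul 1 (xi I A (S x)) (xi A I (E x)))"
proof -
  have P: "\<forall>x\<in>K. mmul 1 (S x) (E x) \<in> Proc A A"
    using SE outer_in_Proc by blast
  consider (empty) "K = {}"
    | (nontrivial) s0 e0 where "s0 \<in> Proc I A" "e0 \<in> Proc A I" "mmul (dm A) e0 s0 0 0 \<noteq> 1"
    | (trivial) x0 where "x0 \<in> K"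
        "\<And>s e. s \<in> Proc I A \<Longrightarrow> e \<in> Proc A I \<Longrightarrow> mmul (dm A) e s 0 0 = 1"
    by blast
  then have "xi A A (idm (dm A)) = lincomb_on K c (\<lambda>x. xi A A (mmul 1 (S x) (E x)))"
  proof cases
    case empty
    then have "idm (dm A) 0 0 = 0"
      using res by (simp add: lincomb_on_def)
    then have "dm A = 0"
      by (simp add: idm_def split: if_splits)
    then have "xi A A (idm (dm A)) = idm 0"
      by (metis xi_idm Lam_eq_0_if_dm_eq_0)
    then show ?thesis
      using empty by (simp add: lincomb_on_def idm_def)
  next
    case nontrivial
    then show ?thesis
      by (rule xi_linear_on_Proc_if_pairing_ne_1[OF _ _ _ K P idm_Proc res])
  next
    case trivial
    then have "sum c K = 1"
      using sum_eq_1_if_pairings_eq_1[OF _ SE _ res] by blast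
    then show ?thesis
      by (rule convex_linear_on_affine_combination[OF convex_linear_on_xi K P idm_Proc _ res])
  qed
  also have "\<dots> = lincomb_on K c (\<lambda>x. mmul 1 (xi I A (S x)) (xi A I (E x)))"
    using SE xi_outer by (blast intro: lincomb_on_cong)
  finally show ?thesis
    by (simp only: xi_idm)
qed

lemma exists_intertwiner:
  "\<exists>X. wf_mat (Lam A) (dm A) X \<and> invertible_m (Lam A) (dm A) X \<and>
       mmul (Lam A) (ones (Lam A)) X = u A \<and> (\<forall>s\<in>Proc I A. mmul (dm A) X s = xi I A s)"
proof -
  obtain K :: "(nat \<times> nat \<times> nat) set" and c S E where K: "finite K"
    and SE: "\<forall>x\<in>K. S x \<in> Proc I A \<and> E x \<in> Proc A I"
    and idd: "idm (dm A) = lincomb_on K c (\<lambda>x. mmul 1 (S x) (E x))"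
    by (rule idm_outer_resolution[OF states_span effects_span])
  note idL = xi_idm_resolution[OF K SE idd]
  define X where "X = lincomb_on K c (\<lambda>x. mmul 1 (xi I A (S x)) (E x))"
  define Y where "Y = lincomb_on K c (\<lambda>x. mmul 1 (S x) (xi A I (E x)))"
  have X_state: "mmul (dm A) X s = xi I A s" if "s \<in> Proc I A" for s
    unfolding X_def using SE that
    by (intro lincomb_outer_mmul_eq[OF idL state_wf(2)]) (simp_all add: xi_pairing)
  have xi_effect_X: "mmul (Lam A) (xi A I e) X = e" if "e \<in> Proc A I" for e
    unfolding X_def using SE that
    by (intro mmul_lincomb_outer_eq[OF idd effect_wf(1)]) (simp_all add: xi_pairing)
  have effect_Y: "mmul (dm A) e Y = xi A I e" if "e \<in> Proc A I" for e
    unfolding Y_def using SE that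
    by (intro mmul_lincomb_outer_eq[OF idL effect_wf(2)]) (simp_all add: xi_pairing)
  have XY: "mmul (dm A) X Y = idm (Lam A)"
    unfolding X_def using SE
    by (intro lincomb_outer_mmul_eq[OF idL wf_mat_idm]) (simp add: effect_Y mmul_idm_right[OF effect_wf(2)])
  have YX: "mmul (Lam A) Y X = idm (dm A)"
    unfolding Y_def using SE
    by (intro lincomb_outer_mmul_eq[OF idd wf_mat_idm]) (simp add: xi_effect_X mmul_idm_right[OF effect_wf(1)])
  have "wf_mat (Lam A) (dm A) X"
    unfolding X_def using SE by (blast intro: wf_mat_lincomb_on wf_mat_mmul state_wf effect_wf)
  moreover have "wf_mat (dm A) (Lam A) Y"
    unfolding Y_def using SE by (blast intro: wf_mat_lincomb_on wf_mat_mmul state_wf effect_wf)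
  ultimately show ?thesis
    using invertible_mI[OF _ _ XY YX] X_state xi_effect_X[OF u_Proc] by (auto simp: xi_u)
qed

lemma xi_eq_conjugation:
  assumes XA: "wf_mat (Lam A) (dm A) XA" "invertible_m (Lam A) (dm A) XA"
      "\<forall>s\<in>Proc I A. mmul (dm A) XA s = xi I A s"
    and XB: "wf_mat (Lam B) (dm B) XB" "\<forall>s\<in>Proc I B. mmul (dm B) XB s = xi I B s"
    and T: "T \<in> Proc A B"
  shows "xi A B T = mmul (dm B) XB (mmul (dm A) T (inv_m (dm A) XA))"
proof -
  have intertwine: "mmul (dm B) XB T = mmul (Lam A) (xi A B T) XA"
  proof (rule mat_eq_if_eq_on_spanning[OF states_span])
    show "wf_mat (Lam B) (dm A) (mmul (dm B) XB T)"
      using wf_mat_mmul[OF XB(1) Proc_wf[OF T]] .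
    show "wf_mat (Lam B) (dm A) (mmul (Lam A) (xi A B T) XA)"
      using wf_mat_mmul[OF xi_wf[OF T] XA(1)] .
  next
    fix s assume s: "s \<in> Proc I A"
    have "mmul (dm A) (mmul (dm B) XB T) s = mmul (dm B) XB (mmul (dm A) T s)"
      by (rule mmul_assoc)
    also have "\<dots> = xi I B (mmul (dm A) T s)"
      using XB(2) Proc_comp[OF s T] by blast
    also have "\<dots> = mmul (Lam A) (xi A B T) (mmul (dm A) XA s)"
      using xi_comp[OF s T] XA(3) s by simp
    also have "\<dots> = mmul (dm A) (mmul (Lam A) (xi A B T) XA) s"
      by (rule mmul_assoc[symmetric])
    finally show "mmul (dm A) (mmul (dm B) XB T) s = mmul (dm A) (mmul (Lam A) (xi A B T) XA) s" .
  qed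
  have "mmul (dm B) XB (mmul (dm A) T (inv_m (dm A) XA))
      = mmul (Lam A) (xi A B T) (mmul (dm A) XA (inv_m (dm A) XA))"
    by (simp add: mmul_assoc[symmetric] intertwine)
  also have "\<dots> = xi A B T"
    using invertible_m_inv_m[OF XA(2)] mmul_idm_right[OF xi_wf[OF T]] by simp
  finally show ?thesis ..
qed

end

theorem proposition2:
  fixes tens :: "'s \<Rightarrow> 's \<Rightarrow> 's" and I :: 's and dm :: "'s \<Rightarrow> nat"
    and Proc :: "'s \<Rightarrow> 's \<Rightarrow> rmat set" and u :: "'s \<Rightarrow> rmat"
    and Lam :: "'s \<Rightarrow> nat" and xi :: "'s \<Rightarrow> 's \<Rightarrow> rmat \<Rightarrow> rmat"
  assumes "tl_gpt tens I dm Proc u"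
    and "quasi_model tens I dm Proc u Lam xi"
  shows "\<exists>\<chi> :: 's \<Rightarrow> rmat.
           (\<forall>A. wf_mat (Lam A) (dm A) (\<chi> A) \<and> invertible_m (Lam A) (dm A) (\<chi> A) \<and>
                mmul (Lam A) (ones (Lam A)) (\<chi> A) = u A) \<and>
           (\<forall>A B T. T \<in> Proc A B \<longrightarrow>
                xi A B T = mmul (dm B) (\<chi> B) (mmul (dm A) T (inv_m (dm A) (\<chi> A))))"
proof -
  interpret gpt_quasi_model tens I dm Proc u Lam xi
    using assms by (rule gpt_quasi_model.intro)
  obtain \<chi> where \<chi>: "\<And>A. wf_mat (Lam A) (dm A) (\<chi> A) \<and> invertible_m (Lam A) (dm A) (\<chi> A) \<and>
      mmul (Lam A) (ones (Lam A)) (\<chi> A) = u A \<and> (\<forall>s\<in>Proc I A. mmul (dm A) (\<chi> A) s = xi I A s)"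
    using exists_intertwiner by metis
  show ?thesis
    using \<chi> xi_eq_conjugation by (intro exI[of _ \<chi>]) blast
qed

end
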